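(* Consider a position in the Strong Ramsey game $\mathcal{R}(K_{\aleph_0}^{(3)}, \hat{K}_{2,4}^{(3)})$ in which $P_2$ has claimed all edges of a copy of $\hat{K}_{2,3}^{(3)}$, $P_1$ has claimed at most $10$ edges in total, and $P_1$ does not have a threat. If it is $P_2$'s turn, then $P_2$ has a strategy from this position guaranteeing that $P_1$ never claims all edges of a copy of $\hat{K}_{2,4}^{(3)}$ (a drawing strategy).
   Context: Strong Ramsey game $\mathcal{R}(B,G)$: players $P_1$, $P_2$ alternately claim unclaimed edges of the $k$-uniform hypergraph $B$, $P_1$ first; the first to claim all edges of a copy of the finite $k$-uniform hypergraph $G$ wins; if nobody does so in finitely many moves the game is a draw. $K_{\aleph_0}^{(3)}$ is the complete $3$-uniform hypergraph on a countably infinite vertex set. $\hat{K}_{2,l}$ ($l\ge3$) is $K_{2,l}$ plus the edge joining its two vertices of degree $l$. For a graph $H$, $H^{(3)}$ is the $3$-uniform hypergraph obtained by adding one fixed new vertex (the center) to every edge of $H$. $P_1$ has a threat if she has claimed all edges of a copy of $\hat{K}_{2,4}^{(3)}$ minus one edge $e$, where the edge of the board corresponding to $e$ is claimed by neither player. *)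

theory Defs
  imports Main
begin

text \<open>Board: the complete 3-uniform hypergraph on the countably infinite vertex set nat.
  An edge of the board is a 3-element set of naturals.\<close>

definition board_edge :: "nat set \<Rightarrow> bool" where
  "board_edge e \<longleftrightarrow> card e = 3"

text \<open>S is (the edge set of) a copy of hat K_{2,l}^(3) in the board: center c, the two
  degree-l vertices u, v, and the l-element set W of remaining vertices.\<close>

definition khat_copy :: "nat \<Rightarrow> nat set set \<Rightarrow> bool" where
  "khat_copy l S \<longleftrightarrow>
     (\<exists>c u v W. distinct [c, u, v] \<and> finite W \<and> card W = l \<and> W \<inter> {c, u, v} = {} \<and>
        S = {{c, u, v}} \<union> (\<lambda>w. {c, u, w}) ` W \<union> (\<lambda>w. {c, v, w}) ` W)"

definition has_copy :: "nat \<Rightarrow> nat set set \<Rightarrow> bool" where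
  "has_copy l X \<longleftrightarrow> (\<exists>S. khat_copy l S \<and> S \<subseteq> X)"

definition threat :: "nat set set \<Rightarrow> nat set set \<Rightarrow> bool" where
  "threat R B \<longleftrightarrow> (\<exists>S e. khat_copy 4 S \<and> e \<in> S \<and> S - {e} \<subseteq> R \<and> e \<notin> R \<and> e \<notin> B)"

text \<open>Continuations of a position (R0, B0) with P2 to move: a list of moves ms, where
  move ms!i is made by P2 if i is even and by P1 if i is odd.\<close>

definition p1_edges :: "nat set set \<Rightarrow> nat set list \<Rightarrow> nat set set" where
  "p1_edges R0 ms = R0 \<union> {ms ! i | i. i < length ms \<and> odd i}"

definition p2_edges :: "nat set set \<Rightarrow> nat set list \<Rightarrow> nat set set" where
  "p2_edges B0 ms = B0 \<union> {ms ! i | i. i < length ms \<and> even i}"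

definition legal_move :: "nat set set \<Rightarrow> nat set set \<Rightarrow> nat set list \<Rightarrow> nat set \<Rightarrow> bool" where
  "legal_move R0 B0 ms e \<longleftrightarrow> board_edge e \<and> e \<notin> p1_edges R0 ms \<and> e \<notin> p2_edges B0 ms"

definition follows_p2 :: "(nat set list \<Rightarrow> nat set) \<Rightarrow> nat set list \<Rightarrow> bool" where
  "follows_p2 \<sigma> ms \<longleftrightarrow> (\<forall>i < length ms. even i \<longrightarrow> ms ! i = \<sigma> (take i ms))"

definition p1_legal :: "nat set set \<Rightarrow> nat set set \<Rightarrow> nat set list \<Rightarrow> bool" where
  "p1_legal R0 B0 ms \<longleftrightarrow>
     (\<forall>i < length ms. odd i \<longrightarrow> legal_move R0 B0 (take i ms) (ms ! i))"

definition ongoing :: "nat set set \<Rightarrow> nat set set \<Rightarrow> nat set list \<Rightarrow> bool" where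
  "ongoing R0 B0 ms \<longleftrightarrow>
     (\<forall>i < length ms. \<not> has_copy 4 (p1_edges R0 (take i ms)) \<and> \<not> has_copy 4 (p2_edges B0 (take i ms)))"

definition p2_drawing_strategy :: "nat set set \<Rightarrow> nat set set \<Rightarrow> (nat set list \<Rightarrow> nat set) \<Rightarrow> bool" where
  "p2_drawing_strategy R0 B0 \<sigma> \<longleftrightarrow>
     (\<forall>ms. follows_p2 \<sigma> ms \<and> p1_legal R0 B0 ms \<and> ongoing R0 B0 ms \<longrightarrow>
        \<not> has_copy 4 (p1_edges R0 ms) \<and>
        (even (length ms) \<and> \<not> has_copy 4 (p2_edges B0 ms) \<longrightarrow> legal_move R0 B0 ms (\<sigma> ms)))"

end

theory Submission
  imports Defs
begin

(*
  P2 owns a copy of hat K_{2,3}^(3) with centre c, vertices u, v of degree 3 and leaf set W0.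
  Unless it can win at once, P2 claims {c, u, w} for a vertex w never used before; then
  {c, v, w} would complete a hat K_{2,4}^(3) for P2, so P1 has to claim it.  Thus P1 always
  owns R plus edges {c, v, w}, each through a new vertex that lies in no other edge of P1.
  In a copy of hat K_{2,4}^(3) with all edges but one owned by P1, the vertices of high
  degree lie in two edges of P1 and hence are old, and a new leaf lies in only one edge of P1.
  So either R alone already gave P1 a threat, or deleting the new leaf leaves a copy of
  hat K_{2,3}^(3) inside R in which c and v are the centre and a vertex of degree 3.
  Such copies at both pairs {c, u} and {c, v} would need 11 edges, so with card R <= 10 P2 can
  choose the roles of u and v to exclude this.
*)

definition khat :: "nat \<Rightarrow> nat \<Rightarrow> nat \<Rightarrow> nat set \<Rightarrow> nat set set" where
  "khat c u v W = {{c, u, v}} \<union> (\<lambda>w. {c, u, w}) ` W \<union> (\<lambda>w. {c, v, w}) ` W"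

lemma khat_copy_iff:
  "khat_copy l S \<longleftrightarrow>
     (\<exists>c u v W. distinct [c, u, v] \<and> finite W \<and> card W = l \<and> W \<inter> {c, u, v} = {} \<and> S = khat c u v W)"
  by (simp add: khat_copy_def khat_def)

lemma khat_swap: "khat c u v W = khat c v u W"
  unfolding khat_def by auto

lemma khat_insert: "khat c u v (insert w W) = insert {c, u, w} (insert {c, v, w} (khat c u v W))"
  unfolding khat_def by auto

lemma khat_edge_subset: "f \<in> khat c u v W \<Longrightarrow> f \<subseteq> {c, u, v} \<union> W"
  unfolding khat_def by auto

lemma khat_mono: "W \<subseteq> W' \<Longrightarrow> khat c u v W \<subseteq> khat c u v W'"
  unfolding khat_def by blast

lemma finite_khat: "finite W \<Longrightarrow> finite (khat c u v W)"
  unfolding khat_def by simp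

lemma card_khat_half:
  assumes "distinct [c, u, v]" "finite W" "W \<inter> {c, u, v} = {}"
  shows "card (insert {c, u, v} ((\<lambda>w. {c, u, w}) ` W)) = card W + 1"
proof -
  have "inj_on (\<lambda>w. {c, u, w}) W"
    unfolding inj_on_def using assms by auto
  moreover have "{c, u, v} \<notin> (\<lambda>w. {c, u, w}) ` W"
    using assms by auto
  ultimately show ?thesis
    using assms(2) by (simp add: card_image)
qed

lemma card_khat:
  assumes "distinct [c, u, v]" "finite W" "W \<inter> {c, u, v} = {}"
  shows "card (khat c u v W) = 2 * card W + 1"
proof -
  have split: "khat c u v W = insert {c, u, v} ((\<lambda>w. {c, u, w}) ` W) \<union> (\<lambda>w. {c, v, w}) ` W"
    unfolding khat_def by auto
  have disjoint: "insert {c, u, v} ((\<lambda>w. {c, u, w}) ` W) \<inter> (\<lambda>w. {c, v, w}) ` W = {}"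
    using assms by auto
  have "inj_on (\<lambda>w. {c, v, w}) W"
    unfolding inj_on_def using assms by auto
  then show ?thesis
    unfolding split using card_Un_disjoint[OF _ _ disjoint] card_khat_half[OF assms] assms(2)
    by (simp add: card_image)
qed

definition copy_at_pair :: "nat \<Rightarrow> nat set set \<Rightarrow> nat \<Rightarrow> nat \<Rightarrow> bool" where
  "copy_at_pair l X a b \<longleftrightarrow>
     (\<exists>c u v W. distinct [c, u, v] \<and> finite W \<and> card W = l \<and> W \<inter> {c, u, v} = {} \<and>
        khat c u v W \<subseteq> X \<and> {c, u} = {a, b})"

lemma copy_at_pair_card:
  assumes "finite X" "distinct [c, u, v]" "{c, u, v} \<notin> X"
    and "copy_at_pair l X c u" "copy_at_pair l X c v"
  shows "3 * l + 2 \<le> card X"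
proof -
  obtain c1 u1 v1 W1 where 1: "distinct [c1, u1, v1]" "finite W1" "card W1 = l"
      "W1 \<inter> {c1, u1, v1} = {}" "khat c1 u1 v1 W1 \<subseteq> X" "{c1, u1} = {c, v}"
    using assms(5) unfolding copy_at_pair_def by blast
  obtain c2 u2 v2 W2 where 2: "distinct [c2, u2, v2]" "finite W2" "card W2 = l"
      "W2 \<inter> {c2, u2, v2} = {}" "khat c2 u2 v2 W2 \<subseteq> X" "{c2, u2} = {c, u}"
    using assms(4) unfolding copy_at_pair_def by blast
  define T where "T = insert {c1, u1, v1} ((\<lambda>w. {c1, u1, w}) ` W1)"
  have card_T: "card T = l + 1"
    unfolding T_def using card_khat_half[OF 1(1,2,4)] 1(3) by simp
  have T_sub: "T \<subseteq> X"
    using 1(5) unfolding T_def khat_def by auto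
  have v_in_T: "v \<in> f" if "f \<in> T" for f
    using 1(6) that unfolding T_def by auto
  have v_notin_copy: "v \<notin> f" if "f \<in> khat c2 u2 v2 W2" for f
  proof
    assume "v \<in> f"
    then have "v = v2 \<or> v \<in> W2"
      using khat_edge_subset[OF that] 2(6) assms(2) by auto
    then have "{c, u, v} \<in> khat c2 u2 v2 W2"
      using 2(6) unfolding khat_def by (auto simp: insert_commute)
    then show False
      using 2(5) assms(3) by blast
  qed
  have "T \<inter> khat c2 u2 v2 W2 = {}"
    using v_in_T v_notin_copy by blast
  moreover have "finite T" "finite (khat c2 u2 v2 W2)"
    using 1(2) 2(2) finite_khat unfolding T_def by simp_all
  ultimately have "card (T \<union> khat c2 u2 v2 W2) = 3 * l + 2"
    using card_T card_khat[OF 2(1,2,4)] 2(3) by (simp add: card_Un_disjoint)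
  moreover have "card (T \<union> khat c2 u2 v2 W2) \<le> card X"
    using card_mono[OF assms(1)] T_sub 2(5) by simp
  ultimately show ?thesis
    by simp
qed

lemma no_copy_after_move:
  assumes "\<not> has_copy 4 X" "\<not> threat X Y" "x \<notin> X" "x \<notin> Y"
  shows "\<not> has_copy 4 (insert x X)"
proof
  assume "has_copy 4 (insert x X)"
  then obtain S where S: "khat_copy 4 S" "S \<subseteq> insert x X"
    unfolding has_copy_def by blast
  show False
  proof (cases "x \<in> S")
    case True
    then have "threat X Y"
      unfolding threat_def using S assms(3,4) by blast
    with assms(2) show False ..
  next
    case False
    then have "S \<subseteq> X"
      using S(2) by blast
    with S(1) assms(1) show False
      unfolding has_copy_def by blast
  qed
qed

(* Infinite members of E are ignored, so no finiteness of the moves of a play has to be tracked. *)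
definition fresh_vertex :: "nat set set \<Rightarrow> nat" where
  "fresh_vertex E = (SOME z. \<forall>f \<in> E. finite f \<longrightarrow> z \<notin> f)"

lemma fresh_vertex_notin:
  assumes "finite E" "f \<in> E" "finite f"
  shows "fresh_vertex E \<notin> f"
proof -
  have "finite (\<Union>{f \<in> E. finite f})"
    using assms(1) by auto
  then obtain z where "z \<notin> \<Union>{f \<in> E. finite f}"
    using ex_new_if_finite[OF infinite_UNIV_nat] by blast
  then have "\<forall>f \<in> E. finite f \<longrightarrow> z \<notin> f"
    by blast
  then have "\<forall>f \<in> E. finite f \<longrightarrow> fresh_vertex E \<notin> f"
    unfolding fresh_vertex_def by (rule someI)
  with assms(2,3) show ?thesis
    by blast
qed

lemma nth_set_snoc:
  "{(xs @ [x]) ! i | i. i < length (xs @ [x]) \<and> P i} =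
   {xs ! i | i. i < length xs \<and> P i} \<union> (if P (length xs) then {x} else {})"
proof -
  have prefix: "(xs @ [x]) ! i = xs ! i" if "i < length xs" for i
    using that by (simp add: nth_append)
  show ?thesis
  proof (intro equalityI subsetI)
    fix y assume "y \<in> {(xs @ [x]) ! i | i. i < length (xs @ [x]) \<and> P i}"
    then obtain i where "i < length xs \<or> i = length xs" "P i" "y = (xs @ [x]) ! i"
      by (auto simp: less_Suc_eq)
    then show "y \<in> {xs ! i | i. i < length xs \<and> P i} \<union> (if P (length xs) then {x} else {})"
      using prefix by auto
  next
    fix y assume "y \<in> {xs ! i | i. i < length xs \<and> P i} \<union> (if P (length xs) then {x} else {})"
    then show "y \<in> {(xs @ [x]) ! i | i. i < length (xs @ [x]) \<and> P i}"
    proof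
      assume "y \<in> {xs ! i | i. i < length xs \<and> P i}"
      then obtain i where "i < length xs" "P i" "y = xs ! i"
        by blast
      then have "y = (xs @ [x]) ! i \<and> i < length (xs @ [x]) \<and> P i"
        using prefix by simp
      then show ?thesis
        by blast
    next
      assume "y \<in> (if P (length xs) then {x} else {})"
      then show ?thesis by (force split: if_splits)
    qed
  qed
qed

lemma p1_edges_snoc:
  "p1_edges R0 (ms @ [x]) = (if odd (length ms) then insert x (p1_edges R0 ms) else p1_edges R0 ms)"
  unfolding p1_edges_def nth_set_snoc by auto

lemma p2_edges_snoc:
  "p2_edges B0 (ms @ [x]) = (if even (length ms) then insert x (p2_edges B0 ms) else p2_edges B0 ms)"
  unfolding p2_edges_def nth_set_snoc by auto

lemma p1_edges_subset: "p1_edges R0 ms \<subseteq> R0 \<union> set ms"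
  unfolding p1_edges_def by auto

lemma p2_edges_subset: "p2_edges B0 ms \<subseteq> B0 \<union> set ms"
  unfolding p2_edges_def by auto

lemma subset_p2_edges: "B0 \<subseteq> p2_edges B0 ms"
  unfolding p2_edges_def by auto

lemma follows_p2_snoc:
  "follows_p2 \<sigma> (ms @ [x]) \<longleftrightarrow> follows_p2 \<sigma> ms \<and> (even (length ms) \<longrightarrow> x = \<sigma> ms)"
  unfolding follows_p2_def by (auto simp: nth_append less_Suc_eq)

lemma p1_legal_snoc:
  "p1_legal R0 B0 (ms @ [x]) \<longleftrightarrow>
     p1_legal R0 B0 ms \<and> (odd (length ms) \<longrightarrow> legal_move R0 B0 ms x)"
  unfolding p1_legal_def by (auto simp: nth_append less_Suc_eq)

lemma ongoing_snoc:
  "ongoing R0 B0 (ms @ [x]) \<longleftrightarrow>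
     ongoing R0 B0 ms \<and> \<not> has_copy 4 (p1_edges R0 ms) \<and> \<not> has_copy 4 (p2_edges B0 ms)"
  unfolding ongoing_def by (auto simp: less_Suc_eq)

locale drawing_position =
  fixes R B :: "nat set set" and c u v :: nat and W0 :: "nat set"
  assumes finite_R: "finite R" and finite_B: "finite B"
    and board_edges: "\<forall>e \<in> R \<union> B. board_edge e"
    and no_threat: "\<not> threat R B"
    and no_copy_R: "\<not> has_copy 4 R"
    and distinct_cuv: "distinct [c, u, v]"
    and card_W0: "card W0 = 3"
    and W0_disjoint: "W0 \<inter> {c, u, v} = {}"
    and khat_in_B: "khat c u v W0 \<subseteq> B"
    and no_copy_at_cv: "\<not> copy_at_pair 3 R c v"
begin

definition initial_vertices :: "nat set" where
  "initial_vertices = \<Union>(R \<union> B)"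

definition responses :: "nat set \<Rightarrow> nat set set" where
  "responses F = (\<lambda>x. {c, v, x}) ` F"

lemma finite_initial_edge: "f \<in> R \<union> B \<Longrightarrow> finite f"
  using board_edges unfolding board_edge_def by (metis card.infinite zero_neq_numeral)

lemma khat_vertices_initial: "{c, u, v} \<union> W0 \<subseteq> initial_vertices"
  using khat_in_B unfolding khat_def initial_vertices_def by blast

lemma board_edge_new_vertex:
  assumes "w \<notin> initial_vertices" "x \<in> {u, v}"
  shows "board_edge {c, x, w}"
proof -
  have "w \<noteq> c" "w \<noteq> x" "c \<noteq> x"
    using assms khat_vertices_initial distinct_cuv by auto
  then show ?thesis
    unfolding board_edge_def by simp
qed

lemma has_copy_extension:
  assumes "w \<notin> initial_vertices" "B \<subseteq> X" "{c, u, w} \<in> X" "{c, v, w} \<in> X"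
  shows "has_copy 4 X"
proof -
  have "finite W0"
    using card_W0 by (simp add: card_ge_0_finite)
  moreover have "w \<notin> W0" "w \<notin> {c, u, v}"
    using assms(1) khat_vertices_initial by auto
  ultimately have "khat_copy 4 (khat c u v (insert w W0))"
    unfolding khat_copy_iff using distinct_cuv card_W0 W0_disjoint
    by (intro exI[of _ c] exI[of _ u] exI[of _ v] exI[of _ "insert w W0"]) auto
  moreover have "khat c u v (insert w W0) \<subseteq> X"
    unfolding khat_insert using khat_in_B assms(2-4) by blast
  ultimately show ?thesis
    unfolding has_copy_def by blast
qed

lemma edge_through_new_vertex:
  assumes "f \<in> R \<union> responses F" "z \<in> f" "z \<notin> initial_vertices"
  shows "f = {c, v, z}"
proof -
  have "f \<notin> R"
    using assms(2,3) unfolding initial_vertices_def by blast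
  then obtain x where "f = {c, v, x}"
    using assms(1) unfolding responses_def by blast
  then show ?thesis
    using assms(2,3) khat_vertices_initial by auto
qed

lemma shared_vertex_initial:
  assumes "f \<in> R \<union> responses F" "g \<in> R \<union> responses F" "f \<noteq> g" "z \<in> f" "z \<in> g"
  shows "z \<in> initial_vertices"
  using edge_through_new_vertex assms by blast

lemma leaf_initial:
  assumes "khat a p q W - {e} \<subseteq> R \<union> responses F" "distinct [a, p, q]" "W \<inter> {a, p, q} = {}"
    and "x \<in> W" "{a, p, x} \<noteq> e" "{a, q, x} \<noteq> e"
  shows "x \<in> initial_vertices"
proof -
  have "{a, p, x} \<in> khat a p q W" "{a, q, x} \<in> khat a p q W"
    using assms(4) unfolding khat_def by auto
  moreover have "{a, p, x} \<noteq> {a, q, x}"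
    using assms(2-4) by auto
  ultimately show ?thesis
    using shared_vertex_initial[where F = F and f = "{a, p, x}" and g = "{a, q, x}" and z = x] assms(1,5,6) by blast
qed

lemma hubs_initial:
  assumes "khat a p q W - {e} \<subseteq> R \<union> responses F" "distinct [a, p, q]" "W \<inter> {a, p, q} = {}"
    and "2 \<le> card W"
  shows "{a, p, q} \<subseteq> initial_vertices"
proof -
  have "finite W" "\<not> card W \<le> Suc 0"
    using assms(4) card.infinite by force+
  then obtain x y where xy: "x \<in> W" "y \<in> W" "x \<noteq> y"
    using card_le_Suc0_iff_eq by blast
  have three_edges: "z \<in> initial_vertices"
    if "f \<in> khat a p q W" "g \<in> khat a p q W" "k \<in> khat a p q W"
      "f \<noteq> g" "f \<noteq> k" "g \<noteq> k" "z \<in> f" "z \<in> g" "z \<in> k" for f g k z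
    using shared_vertex_initial[where F = F and f = f and g = g and z = z]
      shared_vertex_initial[where F = F and f = f and g = k and z = z]
      shared_vertex_initial[where F = F and f = g and g = k and z = z] that assms(1) by blast
  have edges: "{a, p, q} \<in> khat a p q W" "{a, p, x} \<in> khat a p q W" "{a, p, y} \<in> khat a p q W"
    "{a, q, x} \<in> khat a p q W" "{a, q, y} \<in> khat a p q W"
    using xy unfolding khat_def by auto
  have "q \<notin> {a, p, x}" "q \<notin> {a, p, y}" "x \<notin> {a, p, y}"
    "p \<notin> {a, q, x}" "p \<notin> {a, q, y}" "x \<notin> {a, q, y}"
    using xy assms(2,3) by auto
  then have "a \<in> initial_vertices \<and> p \<in> initial_vertices" "q \<in> initial_vertices"
    using three_edges[OF edges(1-3)] three_edges[OF edges(1,4,5)] by blast+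
  then show ?thesis
    by blast
qed

context
  fixes F :: "nat set"
  assumes F_new: "F \<inter> initial_vertices = {}"
begin

lemma initial_edge_in_R:
  assumes "f \<in> R \<union> responses F" "f \<subseteq> initial_vertices"
  shows "f \<in> R"
  using assms F_new unfolding responses_def by auto

lemma copy_at_pair_from_leaf:
  assumes "khat a p q W - {e} \<subseteq> R \<union> responses F" "distinct [a, p, q]" "W \<inter> {a, p, q} = {}"
    and "card W = 4" "{a, p, q} \<subseteq> initial_vertices"
    and "y \<in> W" "y \<notin> initial_vertices" "e = {a, q, y}"
  shows "copy_at_pair 3 R c v"
proof -
  have y_notin: "y \<notin> {a, p, q}"
    using assms(3,6) by blast
  have "{a, p, y} \<in> khat a p q W"
    using assms(6) unfolding khat_def by blast
  moreover have "q \<notin> {a, p, y}"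
    using assms(2) y_notin by auto
  ultimately have "{a, p, y} \<in> khat a p q W - {e}"
    using assms(8) by blast
  then have "{a, p, y} = {c, v, y}"
    using edge_through_new_vertex assms(1,7) by blast
  moreover have "y \<notin> {c, v}"
    using assms(7) khat_vertices_initial by auto
  ultimately have pair: "{a, p} = {c, v}"
    using y_notin by blast
  have "khat a p q (W - {y}) \<subseteq> R"
  proof
    fix g assume g: "g \<in> khat a p q (W - {y})"
    have "y \<notin> g"
      using khat_edge_subset[OF g] y_notin by blast
    then have "g \<in> khat a p q W - {e}"
      using g khat_mono[of "W - {y}" W] assms(8) by blast
    then have "g \<in> R \<union> responses F"
      using assms(1) by blast
    moreover have "g \<subseteq> initial_vertices"
    proof
      fix x assume "x \<in> g"
      then have "x \<in> {a, p, q} \<or> x \<in> W - {y}"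
        using khat_edge_subset[OF g] by blast
      moreover have "x \<in> initial_vertices" if x: "x \<in> W - {y}"
      proof -
        have "y \<notin> {a, p, x}" "y \<notin> {a, q, x}"
          using x y_notin by auto
        then show ?thesis
          using leaf_initial[OF assms(1-3)] x assms(8) by blast
      qed
      ultimately show "x \<in> initial_vertices"
        using assms(5) by blast
    qed
    ultimately show "g \<in> R"
      by (rule initial_edge_in_R)
  qed
  moreover have "finite (W - {y})" "card (W - {y}) = 3" "(W - {y}) \<inter> {a, p, q} = {}"
    using assms(3,4,6) card.infinite by force+
  ultimately show ?thesis
    unfolding copy_at_pair_def using assms(2) pair
    by (intro exI[of _ a] exI[of _ p] exI[of _ q] exI[of _ "W - {y}"]) simp
qed

lemma near_copy_in_R:
  assumes "khat a p q W - {e} \<subseteq> R \<union> responses F" "distinct [a, p, q]" "W \<inter> {a, p, q} = {}"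
    and "card W = 4"
  shows "khat a p q W - {e} \<subseteq> R"
proof
  fix f assume f: "f \<in> khat a p q W - {e}"
  show "f \<in> R"
  proof (rule ccontr)
    assume "f \<notin> R"
    then obtain y where "y \<in> F" "f = {c, v, y}"
      using f assms(1) unfolding responses_def by blast
    then have y: "y \<in> f" "y \<notin> initial_vertices"
      using F_new by auto
    have hubs: "{a, p, q} \<subseteq> initial_vertices"
      using hubs_initial[OF assms(1-3)] assms(4) by simp
    moreover have "y \<in> {a, p, q} \<union> W"
      using khat_edge_subset[of f] f y(1) by blast
    ultimately have "y \<in> W"
      using y(2) by blast
    then have "e = {a, p, y} \<or> e = {a, q, y}"
      using leaf_initial[OF assms(1-3)] y(2) by blast
    then have "copy_at_pair 3 R c v"
    proof
      assume "e = {a, q, y}"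
      then show ?thesis
        using copy_at_pair_from_leaf[OF assms hubs \<open>y \<in> W\<close> y(2)] by blast
    next
      assume "e = {a, p, y}"
      have swapped: "khat a q p W - {e} \<subseteq> R \<union> responses F"
        using assms(1) by (simp add: khat_swap[of a q p])
      have "distinct [a, q, p]" "W \<inter> {a, q, p} = {}" "{a, q, p} \<subseteq> initial_vertices"
        using assms(2,3) hubs by auto
      then show ?thesis
        using copy_at_pair_from_leaf[OF swapped _ _ assms(4) _ \<open>y \<in> W\<close> y(2)] \<open>e = {a, p, y}\<close>
        by blast
    qed
    with no_copy_at_cv show False ..
  qed
qed

lemma no_threat_with_responses:
  assumes "B \<subseteq> Y"
  shows "\<not> threat (R \<union> responses F) Y"
proof
  assume "threat (R \<union> responses F) Y"
  then obtain S e where S: "khat_copy 4 S" "e \<in> S" "S - {e} \<subseteq> R \<union> responses F"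
      "e \<notin> R \<union> responses F" "e \<notin> Y"
    unfolding threat_def by blast
  then have "S - {e} \<subseteq> R"
    unfolding khat_copy_iff using near_copy_in_R by blast
  then have "threat R B"
    unfolding threat_def using S assms by blast
  with no_threat show False ..
qed

end

definition winning_move :: "nat set list \<Rightarrow> nat set \<Rightarrow> bool" where
  "winning_move ms e \<longleftrightarrow> legal_move R B ms e \<and> has_copy 4 (insert e (p2_edges B ms))"

definition strategy :: "nat set list \<Rightarrow> nat set" where
  "strategy ms =
     (if \<exists>e. winning_move ms e then SOME e. winning_move ms e
      else {c, u, fresh_vertex (R \<union> B \<union> set ms)})"

lemma strategy_winning: "\<exists>e. winning_move ms e \<Longrightarrow> winning_move ms (strategy ms)"
  unfolding strategy_def by (simp add: someI_ex)

lemma strategy_threat: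
  assumes "\<not> (\<exists>e. winning_move ms e)"
  shows "strategy ms = {c, u, fresh_vertex (R \<union> B \<union> set ms)}"
  unfolding strategy_def by (rule if_not_P[OF assms])

lemma fresh_vertex_play:
  assumes "f \<in> R \<union> B \<union> set ms" "finite f"
  shows "fresh_vertex (R \<union> B \<union> set ms) \<notin> f"
  using fresh_vertex_notin finite_R finite_B assms by simp

lemma fresh_vertex_play_new: "fresh_vertex (R \<union> B \<union> set ms) \<notin> initial_vertices"
  using fresh_vertex_play finite_initial_edge unfolding initial_vertices_def by blast

lemma strategy_legal: "legal_move R B ms (strategy ms)"
proof (cases "\<exists>e. winning_move ms e")
  case True
  then show ?thesis
    using strategy_winning winning_move_def by blast
next
  case False
  define w where "w = fresh_vertex (R \<union> B \<union> set ms)"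
  have "{c, u, w} \<notin> R \<union> B \<union> set ms"
    using fresh_vertex_play[of "{c, u, w}"] unfolding w_def by blast
  moreover have "board_edge {c, u, w}"
    using board_edge_new_vertex fresh_vertex_play_new unfolding w_def by blast
  moreover have "strategy ms = {c, u, w}"
    using strategy_threat[OF False] unfolding w_def .
  ultimately show ?thesis
    using p1_edges_subset[of R ms] p2_edges_subset[of B ms] unfolding legal_move_def by auto
qed

definition p2_turn_invariant :: "nat set list \<Rightarrow> bool" where
  "p2_turn_invariant ms \<longleftrightarrow>
     (\<exists>e. winning_move ms e) \<or>
     (\<exists>F. F \<inter> initial_vertices = {} \<and> p1_edges R ms = R \<union> responses F)"

definition p1_turn_invariant :: "nat set list \<Rightarrow> bool" where
  "p1_turn_invariant ms \<longleftrightarrow>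
     has_copy 4 (p2_edges B ms) \<or>
     (\<exists>F w. F \<inter> initial_vertices = {} \<and> w \<notin> initial_vertices \<and>
        p1_edges R ms = R \<union> responses F \<and> {c, u, w} \<in> p2_edges B ms \<and> legal_move R B ms {c, v, w})"

lemma p2_turn_step:
  assumes "p2_turn_invariant ms" "even (length ms)"
  shows "p1_turn_invariant (ms @ [strategy ms])"
proof (cases "\<exists>e. winning_move ms e")
  case True
  then have "has_copy 4 (p2_edges B (ms @ [strategy ms]))"
    using strategy_winning assms(2) unfolding winning_move_def p2_edges_snoc by simp
  then show ?thesis
    unfolding p1_turn_invariant_def by blast
next
  case False
  then obtain F where F: "F \<inter> initial_vertices = {}" "p1_edges R ms = R \<union> responses F"
    using assms(1) unfolding p2_turn_invariant_def by blast
  define w where "w = fresh_vertex (R \<union> B \<union> set ms)"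
  have w: "w \<notin> initial_vertices"
    unfolding w_def by (rule fresh_vertex_play_new)
  have p1: "p1_edges R (ms @ [strategy ms]) = p1_edges R ms"
    using assms(2) by (simp add: p1_edges_snoc)
  have p2: "p2_edges B (ms @ [strategy ms]) = insert {c, u, w} (p2_edges B ms)"
    using assms(2) strategy_threat[OF False] by (simp add: p2_edges_snoc w_def)
  have "{c, v, w} \<notin> R \<union> B \<union> set ms"
    using fresh_vertex_play[of "{c, v, w}"] unfolding w_def by blast
  moreover have "{c, v, w} \<noteq> {c, u, w}"
    using w khat_vertices_initial distinct_cuv by auto
  moreover have "board_edge {c, v, w}"
    using board_edge_new_vertex w by blast
  ultimately have "legal_move R B (ms @ [strategy ms]) {c, v, w}"
    unfolding legal_move_def p1 p2 using p1_edges_subset p2_edges_subset by blast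
  then show ?thesis
    unfolding p1_turn_invariant_def using F w p1 p2 by blast
qed

lemma p1_turn_step:
  assumes "p1_turn_invariant ms" "\<not> has_copy 4 (p2_edges B ms)" "odd (length ms)"
  shows "p2_turn_invariant (ms @ [x])"
proof -
  obtain F w where F: "F \<inter> initial_vertices = {}" "w \<notin> initial_vertices"
      "p1_edges R ms = R \<union> responses F" "{c, u, w} \<in> p2_edges B ms" "legal_move R B ms {c, v, w}"
    using assms(1,2) unfolding p1_turn_invariant_def by blast
  have p1: "p1_edges R (ms @ [x]) = insert x (p1_edges R ms)"
    and p2: "p2_edges B (ms @ [x]) = p2_edges B ms"
    using assms(3) by (simp_all add: p1_edges_snoc p2_edges_snoc)
  show ?thesis
  proof (cases "x = {c, v, w}")
    case True
    have "responses (insert w F) = insert {c, v, w} (responses F)"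
      unfolding responses_def by simp
    then have "p1_edges R (ms @ [x]) = R \<union> responses (insert w F)"
      using p1 F(3) True by simp
    moreover have "insert w F \<inter> initial_vertices = {}"
      using F(1,2) by blast
    ultimately show ?thesis
      unfolding p2_turn_invariant_def by blast
  next
    case False
    then have "legal_move R B (ms @ [x]) {c, v, w}"
      using F(5) unfolding legal_move_def p1 p2 by blast
    moreover have "has_copy 4 (insert {c, v, w} (p2_edges B (ms @ [x])))"
    proof (rule has_copy_extension[OF F(2)])
      show "B \<subseteq> insert {c, v, w} (p2_edges B (ms @ [x]))"
        using subset_p2_edges by blast
    qed (use F(4) p2 in simp_all)
    ultimately show ?thesis
      unfolding p2_turn_invariant_def winning_move_def by blast
  qed
qed

lemma p1_move_no_copy:
  assumes "p1_turn_invariant ms" "\<not> has_copy 4 (p2_edges B ms)"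
    and "\<not> has_copy 4 (p1_edges R ms)" "legal_move R B ms x"
  shows "\<not> has_copy 4 (insert x (p1_edges R ms))"
proof -
  obtain F where "F \<inter> initial_vertices = {}" "p1_edges R ms = R \<union> responses F"
    using assms(1,2) unfolding p1_turn_invariant_def by blast
  then have "\<not> threat (p1_edges R ms) (p2_edges B ms)"
    using no_threat_with_responses subset_p2_edges by simp
  then show ?thesis
    using no_copy_after_move assms(3,4) unfolding legal_move_def by blast
qed

lemma play_invariant:
  assumes "follows_p2 strategy ms" "p1_legal R B ms" "ongoing R B ms"
  shows "\<not> has_copy 4 (p1_edges R ms) \<and>
    (if even (length ms) then p2_turn_invariant ms else p1_turn_invariant ms)"
  using assms
proof (induction ms rule: rev_induct)
  case Nil
  have "p1_edges R [] = R"
    unfolding p1_edges_def by simp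
  moreover have "R = R \<union> responses {}"
    unfolding responses_def by simp
  ultimately have "p2_turn_invariant []"
    unfolding p2_turn_invariant_def by blast
  then show ?case
    using no_copy_R \<open>p1_edges R [] = R\<close> by simp
next
  case (snoc x ms)
  then have IH: "\<not> has_copy 4 (p1_edges R ms)"
      "if even (length ms) then p2_turn_invariant ms else p1_turn_invariant ms"
    and no_copy_B: "\<not> has_copy 4 (p2_edges B ms)"
    by (simp_all add: follows_p2_snoc p1_legal_snoc ongoing_snoc)
  show ?case
  proof (cases "even (length ms)")
    case True
    then have "x = strategy ms"
      using snoc.prems(1) by (simp add: follows_p2_snoc)
    then show ?thesis
      using p2_turn_step IH True by (simp add: p1_edges_snoc)
  next
    case False
    then have "legal_move R B ms x"
      using snoc.prems(2) by (simp add: p1_legal_snoc)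
    then show ?thesis
      using p1_turn_step p1_move_no_copy IH no_copy_B False by (simp add: p1_edges_snoc)
  qed
qed

theorem strategy_drawing: "p2_drawing_strategy R B strategy"
  unfolding p2_drawing_strategy_def using play_invariant strategy_legal by blast

end

theorem corollary3p3:
  fixes R B :: "nat set set"
  assumes "finite R" and "finite B"
    and "\<forall>e \<in> R \<union> B. board_edge e"
    and "R \<inter> B = {}"
    and "card R = card B + 1"
    and "\<not> has_copy 4 R" and "\<not> has_copy 4 B"
    and "has_copy 3 B"
    and "card R \<le> 10"
    and "\<not> threat R B"
  shows "\<exists>\<sigma>. p2_drawing_strategy R B \<sigma>"
proof -
  obtain c u v W where cuv: "distinct [c, u, v]" "finite W" "card W = 3" "W \<inter> {c, u, v} = {}"
    and in_B: "khat c u v W \<subseteq> B"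
    using assms(8) unfolding has_copy_def khat_copy_iff by blast
  have "{c, u, v} \<notin> R"
    using in_B assms(4) unfolding khat_def by blast
  then have "\<not> copy_at_pair 3 R c v \<or> \<not> copy_at_pair 3 R c u"
    using copy_at_pair_card[OF assms(1) cuv(1)] assms(9) by fastforce
  then show ?thesis
  proof
    assume "\<not> copy_at_pair 3 R c v"
    then interpret drawing_position R B c u v W
      using assms cuv in_B by unfold_locales auto
    show ?thesis
      using strategy_drawing by blast
  next
    assume "\<not> copy_at_pair 3 R c u"
    then interpret drawing_position R B c v u W
      using assms cuv in_B khat_swap[of c u v W] by unfold_locales auto
    show ?thesis
      using strategy_drawing by blast
  qed
qed

end
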